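(* Let $p$ be a propositional variable. The formula $\neg\Box\bot\to(\neg\neg\Box p\to\Box\neg\neg p)$ is derivable in $\mathsf{CK}\oplus\mathsf{N}_{\Diamond\Box}\oplus\mathsf{I}_{\Diamond\Box}$ but not in $\mathsf{CK}$.
   Context: Formulas: $\mathbf{L}$ is generated from a countably infinite set of propositional variables by $\varphi ::= p \mid \bot \mid \varphi\wedge\varphi \mid \varphi\vee\varphi \mid \varphi\to\varphi \mid \Box\varphi \mid \Diamond\varphi$; $\neg\varphi:=\varphi\to\bot$. Axioms: $\mathsf{K}_\Box$: $\Box(\varphi\to\psi)\to(\Box\varphi\to\Box\psi)$; $\mathsf{K}_\Diamond$: $\Box(\varphi\to\psi)\to(\Diamond\varphi\to\Diamond\psi)$; $\mathsf{N}_{\Diamond\Box}$: $\Diamond\bot\to\Box\bot$; $\mathsf{I}_{\Diamond\Box}$: $(\Diamond\varphi\to\Box\psi)\to\Box(\varphi\to\psi)$. For a set $\mathsf{Ax}$ of axioms, $\mathsf{CK}\oplus\mathsf{Ax}$ is the relation $\Gamma\vdash_{\mathsf{Ax}}\varphi$ inductively generated by: (Ax) $\Gamma\vdash\varphi$ whenever $\varphi$ is a substitution instance of an axiom of a standard Hilbert axiomatisation of intuitionistic propositional logic, of $\mathsf{K}_\Box$, of $\mathsf{K}_\Diamond$, or of an element of $\mathsf{Ax}$; (El) $\Gamma\vdash\varphi$ if $\varphi\in\Gamma$; (MP) from $\Gamma\vdash\varphi$ and $\Gamma\vdash\varphi\to\psi$ infer $\Gamma\vdash\psi$; (Nec) from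 $\emptyset\vdash\varphi$ infer $\Gamma\vdash\Box\varphi$. $\mathsf{CK}$ is the case $\mathsf{Ax}=\emptyset$. A formula is derivable in a logic if $\emptyset\vdash_{\mathsf{Ax}}\varphi$. *)

theory Defs
  imports Main
begin

datatype fm =
    Var nat
  | Bot
  | Conj fm fm
  | Disj fm fm
  | Imp fm fm
  | Box fm
  | Dia fm

definition Neg :: "fm \<Rightarrow> fm" where
  "Neg \<phi> = Imp \<phi> Bot"

fun subst :: "(nat \<Rightarrow> fm) \<Rightarrow> fm \<Rightarrow> fm" where
  "subst \<sigma> (Var n) = \<sigma> n"
| "subst \<sigma> Bot = Bot"
| "subst \<sigma> (Conj a b) = Conj (subst \<sigma> a) (subst \<sigma> b)"
| "subst \<sigma> (Disj a b) = Disj (subst \<sigma> a) (subst \<sigma> b)"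
| "subst \<sigma> (Imp a b) = Imp (subst \<sigma> a) (subst \<sigma> b)"
| "subst \<sigma> (Box a) = Box (subst \<sigma> a)"
| "subst \<sigma> (Dia a) = Dia (subst \<sigma> a)"

inductive IPC_ax :: "fm \<Rightarrow> bool" where
  ax1: "IPC_ax (Imp a (Imp b a))"
| ax2: "IPC_ax (Imp (Imp a (Imp b c)) (Imp (Imp a b) (Imp a c)))"
| ax3: "IPC_ax (Imp (Conj a b) a)"
| ax4: "IPC_ax (Imp (Conj a b) b)"
| ax5: "IPC_ax (Imp a (Imp b (Conj a b)))"
| ax6: "IPC_ax (Imp a (Disj a b))"
| ax7: "IPC_ax (Imp b (Disj a b))"
| ax8: "IPC_ax (Imp (Imp a c) (Imp (Imp b c) (Imp (Disj a b) c)))"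
| ax9: "IPC_ax (Imp Bot a)"

definition K_Box :: "fm \<Rightarrow> fm \<Rightarrow> fm" where
  "K_Box \<phi> \<psi> = Imp (Box (Imp \<phi> \<psi>)) (Imp (Box \<phi>) (Box \<psi>))"

definition K_Dia :: "fm \<Rightarrow> fm \<Rightarrow> fm" where
  "K_Dia \<phi> \<psi> = Imp (Box (Imp \<phi> \<psi>)) (Imp (Dia \<phi>) (Dia \<psi>))"

text \<open>Extra axioms are given as formulas (schemata in the propositional variables);
  their substitution instances are axioms.\<close>
definition N_DiaBox :: fm where
  "N_DiaBox = Imp (Dia Bot) (Box Bot)"

definition I_DiaBox :: fm where
  "I_DiaBox = Imp (Imp (Dia (Var 0)) (Box (Var 1))) (Box (Imp (Var 0) (Var 1)))"

inductive derives :: "fm set \<Rightarrow> fm set \<Rightarrow> fm \<Rightarrow> bool" for Ax :: "fm set" where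
  Ax_IPC: "IPC_ax \<phi> \<Longrightarrow> derives Ax \<Gamma> \<phi>"
| Ax_KBox: "derives Ax \<Gamma> (K_Box \<phi> \<psi>)"
| Ax_KDia: "derives Ax \<Gamma> (K_Dia \<phi> \<psi>)"
| Ax_extra: "\<chi> \<in> Ax \<Longrightarrow> derives Ax \<Gamma> (subst \<sigma> \<chi>)"
| El: "\<phi> \<in> \<Gamma> \<Longrightarrow> derives Ax \<Gamma> \<phi>"
| MP: "derives Ax \<Gamma> \<phi> \<Longrightarrow> derives Ax \<Gamma> (Imp \<phi> \<psi>) \<Longrightarrow> derives Ax \<Gamma> \<psi>"
| Nec: "derives Ax {} \<phi> \<Longrightarrow> derives Ax \<Gamma> (Box \<phi>)"

definition derivable :: "fm set \<Rightarrow> fm \<Rightarrow> bool" where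
  "derivable Ax \<phi> \<longleftrightarrow> derives Ax {} \<phi>"

end

theory Submission
  imports Defs
begin

text \<open>Derivability: under \<open>\<not>\<box>\<bottom>\<close> and \<open>\<not>\<not>\<box>p\<close>, assume \<open>\<diamond>\<not>p\<close>. Then \<open>\<box>p\<close> would give
  \<open>\<box>\<not>\<not>p\<close>, hence \<open>\<diamond>\<bottom>\<close> and, by \<open>N\<^sub>\<diamond>\<^sub>\<box>\<close>, \<open>\<box>\<bottom>\<close>; so \<open>\<not>\<box>p\<close>, contradicting \<open>\<not>\<not>\<box>p\<close>.
  Hence \<open>\<diamond>\<not>p \<rightarrow> \<box>\<bottom>\<close>, which \<open>I\<^sub>\<diamond>\<^sub>\<box>\<close> turns into \<open>\<box>(\<not>p \<rightarrow> \<bottom>)\<close>.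

  Underivability: CK is sound for intuitionistic Kripke models with a preorder \<open>\<le>\<close> and an
  accessibility relation \<open>R\<close>, where \<open>\<box>a\<close> holds at \<open>x\<close> if \<open>a\<close> holds at every \<open>R\<close>-successor of
  every \<open>\<le>\<close>-successor of \<open>x\<close>. Take \<open>u\<^sub>0 \<le> u\<^sub>1\<close> with \<open>R u\<^sub>0 v\<^sub>0\<close>, \<open>R u\<^sub>1 v\<^sub>1\<close> and \<open>p\<close> true only at \<open>v\<^sub>1\<close>.
  At \<open>u\<^sub>0\<close>, \<open>\<not>\<box>\<bottom>\<close> holds because every world above \<open>u\<^sub>0\<close> has a successor, and \<open>\<not>\<not>\<box>p\<close>
  holds because \<open>\<box>p\<close> holds at \<open>u\<^sub>1\<close>; but \<open>\<not>p\<close> holds at \<open>v\<^sub>0\<close>, so \<open>\<box>\<not>\<not>p\<close> fails.\<close>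

lemma derives_imp_refl: "derives Ax \<Gamma> (Imp a a)"
proof -
  have "derives Ax \<Gamma> (Imp (Imp a (Imp (Imp a a) a)) (Imp (Imp a (Imp a a)) (Imp a a)))"
    by (intro derives.Ax_IPC ax2)
  then have "derives Ax \<Gamma> (Imp (Imp a (Imp a a)) (Imp a a))"
    by (rule derives.MP[rotated]) (intro derives.Ax_IPC ax1)
  then show ?thesis
    by (rule derives.MP[rotated]) (intro derives.Ax_IPC ax1)
qed

lemma derives_weaken_imp: "derives Ax \<Gamma> b \<Longrightarrow> derives Ax \<Gamma> (Imp a b)"
  by (rule derives.MP[OF _ derives.Ax_IPC[OF ax1]])

lemma deduction_theorem: "derives Ax (insert a \<Gamma>) b \<Longrightarrow> derives Ax \<Gamma> (Imp a b)"
proof (induction "insert a \<Gamma>" b arbitrary: \<Gamma> rule: derives.induct)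
  case (Ax_IPC \<phi>)
  then show ?case by (rule derives_weaken_imp[OF derives.Ax_IPC])
next
  case (Ax_KBox \<phi> \<psi>)
  show ?case by (rule derives_weaken_imp[OF derives.Ax_KBox])
next
  case (Ax_KDia \<phi> \<psi>)
  show ?case by (rule derives_weaken_imp[OF derives.Ax_KDia])
next
  case (Ax_extra \<chi> \<sigma>)
  then show ?case by (rule derives_weaken_imp[OF derives.Ax_extra])
next
  case (El \<phi>)
  then show ?case
  proof (cases "\<phi> = a")
    case False
    with El have "\<phi> \<in> \<Gamma>" by simp
    then show ?thesis by (rule derives_weaken_imp[OF derives.El])
  qed (simp add: derives_imp_refl)
next
  case (MP \<phi> \<psi>)
  have "derives Ax \<Gamma> (Imp (Imp a (Imp \<phi> \<psi>)) (Imp (Imp a \<phi>) (Imp a \<psi>)))"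
    by (intro derives.Ax_IPC ax2)
  moreover have "derives Ax \<Gamma> (Imp a (Imp \<phi> \<psi>))" and "derives Ax \<Gamma> (Imp a \<phi>)"
    using MP.hyps by simp_all
  ultimately show ?case
    by (meson derives.MP)
next
  case (Nec \<phi>)
  show ?case by (rule derives_weaken_imp[OF derives.Nec[OF Nec.hyps(1)]])
qed

lemma derives_ex_falso: "derives Ax \<Gamma> Bot \<Longrightarrow> derives Ax \<Gamma> a"
  by (rule derives.MP[OF _ derives.Ax_IPC[OF ax9]])

lemma derives_Box_mp:
  "derives Ax \<Gamma> (Box (Imp a b)) \<Longrightarrow> derives Ax \<Gamma> (Box a) \<Longrightarrow> derives Ax \<Gamma> (Box b)"
  using derives.MP derives.MP[OF _ derives.Ax_KBox[unfolded K_Box_def]] by blast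

lemma derives_Dia_mp:
  "derives Ax \<Gamma> (Box (Imp a b)) \<Longrightarrow> derives Ax \<Gamma> (Dia a) \<Longrightarrow> derives Ax \<Gamma> (Dia b)"
  using derives.MP derives.MP[OF _ derives.Ax_KDia[unfolded K_Dia_def]] by blast

lemma derives_N_DiaBox:
  assumes "N_DiaBox \<in> Ax" and "derives Ax \<Gamma> (Dia Bot)"
  shows "derives Ax \<Gamma> (Box Bot)"
proof -
  have "derives Ax \<Gamma> (subst Var N_DiaBox)"
    using assms(1) by (rule derives.Ax_extra)
  then show ?thesis
    using derives.MP[OF assms(2)] by (simp add: N_DiaBox_def)
qed

lemma derives_I_DiaBox:
  assumes "I_DiaBox \<in> Ax" and "derives Ax \<Gamma> (Imp (Dia a) (Box b))"
  shows "derives Ax \<Gamma> (Box (Imp a b))"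
proof -
  have "derives Ax \<Gamma> (subst (\<lambda>n. if n = 0 then a else b) I_DiaBox)"
    using assms(1) by (rule derives.Ax_extra)
  then show ?thesis
    using derives.MP[OF assms(2)] by (simp add: I_DiaBox_def)
qed

lemma derivable_Box_not_not:
  assumes "N_DiaBox \<in> Ax" and "I_DiaBox \<in> Ax"
  shows "derivable Ax (Imp (Neg (Box Bot)) (Imp (Neg (Neg (Box a))) (Box (Neg (Neg a)))))"
proof -
  define \<Gamma> where "\<Gamma> = {Neg (Neg (Box a)), Neg (Box Bot)}"
  have "derives Ax (insert (Box a) (insert (Dia (Neg a)) \<Gamma>)) Bot"
    (is "derives Ax ?\<Delta> Bot")
  proof -
    have "derives Ax {a, Neg a} Bot"
      unfolding Neg_def by (rule derives.MP[of _ _ a]; rule derives.El) simp_all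
    then have "derives Ax {} (Imp a (Neg (Neg a)))"
      unfolding Neg_def by (intro deduction_theorem) (simp add: insert_commute)
    then have "derives Ax ?\<Delta> (Box (Neg (Neg a)))"
      by (rule derives_Box_mp[OF derives.Nec derives.El]) simp
    then have "derives Ax ?\<Delta> (Dia Bot)"
      unfolding Neg_def by (rule derives_Dia_mp) (rule derives.El, simp add: Neg_def)
    then have "derives Ax ?\<Delta> (Box Bot)"
      by (rule derives_N_DiaBox[OF assms(1)])
    moreover have "derives Ax ?\<Delta> (Neg (Box Bot))"
      by (rule derives.El) (simp add: \<Gamma>_def)
    ultimately show ?thesis
      unfolding Neg_def by (rule derives.MP)
  qed
  then have "derives Ax (insert (Dia (Neg a)) \<Gamma>) (Neg (Box a))"
    unfolding Neg_def by (rule deduction_theorem)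
  moreover have "derives Ax (insert (Dia (Neg a)) \<Gamma>) (Neg (Neg (Box a)))"
    by (rule derives.El) (simp add: \<Gamma>_def)
  ultimately have "derives Ax (insert (Dia (Neg a)) \<Gamma>) Bot"
    unfolding Neg_def by (rule derives.MP)
  then have "derives Ax \<Gamma> (Imp (Dia (Neg a)) (Box Bot))"
    by (rule deduction_theorem[OF derives_ex_falso])
  then have "derives Ax \<Gamma> (Box (Neg (Neg a)))"
    unfolding Neg_def[of "Neg a"] by (rule derives_I_DiaBox[OF assms(2)])
  then show ?thesis
    unfolding derivable_def \<Gamma>_def by (intro deduction_theorem) (simp add: insert_commute)
qed

locale ck_model =
  fixes le :: "'w \<Rightarrow> 'w \<Rightarrow> bool" (infix "\<preceq>" 50)
    and R :: "'w \<Rightarrow> 'w \<Rightarrow> bool"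
    and V :: "nat \<Rightarrow> 'w \<Rightarrow> bool"
  assumes le_refl: "x \<preceq> x"
    and le_trans: "x \<preceq> y \<Longrightarrow> y \<preceq> z \<Longrightarrow> x \<preceq> z"
    and V_mono: "V n x \<Longrightarrow> x \<preceq> y \<Longrightarrow> V n y"
begin

fun sat :: "'w \<Rightarrow> fm \<Rightarrow> bool" where
  "sat x (Var n) = V n x"
| "sat x Bot = False"
| "sat x (Conj a b) = (sat x a \<and> sat x b)"
| "sat x (Disj a b) = (sat x a \<or> sat x b)"
| "sat x (Imp a b) = (\<forall>y. x \<preceq> y \<longrightarrow> sat y a \<longrightarrow> sat y b)"
| "sat x (Box a) = (\<forall>y z. x \<preceq> y \<longrightarrow> R y z \<longrightarrow> sat z a)"
| "sat x (Dia a) = (\<forall>y. x \<preceq> y \<longrightarrow> (\<exists>z. R y z \<and> sat z a))"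

lemma sat_mono: "sat x a \<Longrightarrow> x \<preceq> y \<Longrightarrow> sat y a"
  by (induction a arbitrary: x y) (simp_all add: V_mono, (meson le_trans)+)

lemma sat_IPC_ax: "IPC_ax a \<Longrightarrow> sat x a"
  by (induction rule: IPC_ax.induct) (simp_all, (meson le_refl le_trans sat_mono)+)

lemma soundness: "derives {} \<Gamma> a \<Longrightarrow> \<forall>b\<in>\<Gamma>. sat x b \<Longrightarrow> sat x a"
proof (induction arbitrary: x rule: derives.induct)
  case (Ax_KBox \<Gamma> a b)
  show ?case
    unfolding K_Box_def by simp (meson le_refl le_trans)
next
  case (Ax_KDia \<Gamma> a b)
  show ?case
    unfolding K_Dia_def by simp (meson le_refl le_trans)
next
  case (MP \<Gamma> a b)
  then show ?case
    using le_refl by force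
qed (simp_all add: sat_IPC_ax)

end

datatype world = u\<^sub>0 | u\<^sub>1 | v\<^sub>0 | v\<^sub>1

definition world_le :: "world \<Rightarrow> world \<Rightarrow> bool" where
  "world_le x y \<longleftrightarrow> x = y \<or> (x = u\<^sub>0 \<and> y = u\<^sub>1)"

definition world_R :: "world \<Rightarrow> world \<Rightarrow> bool" where
  "world_R x y \<longleftrightarrow> (x = u\<^sub>0 \<and> y = v\<^sub>0) \<or> (x = u\<^sub>1 \<and> y = v\<^sub>1)"

interpretation counter: ck_model world_le world_R "\<lambda>n x. x = v\<^sub>1"
  by unfold_locales (auto simp: world_le_def)

lemma counter_refutes:
  "\<not> counter.sat u\<^sub>0 (Imp (Neg (Box Bot)) (Imp (Neg (Neg (Box (Var p)))) (Box (Neg (Neg (Var p))))))"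
proof -
  have "counter.sat u\<^sub>0 (Neg (Box Bot))"
    unfolding Neg_def by (auto simp: world_le_def world_R_def)
  moreover have "counter.sat u\<^sub>1 (Box (Var p))"
    by (auto simp: world_le_def world_R_def)
  then have "counter.sat u\<^sub>0 (Neg (Neg (Box (Var p))))"
    unfolding Neg_def by (auto simp: world_le_def)
  moreover have "counter.sat v\<^sub>0 (Neg (Var p))"
    unfolding Neg_def by (auto simp: world_le_def)
  then have "\<not> counter.sat u\<^sub>0 (Box (Neg (Neg (Var p))))"
    unfolding Neg_def by (auto simp: world_le_def world_R_def)
  ultimately show ?thesis
    using counter.le_refl by auto
qed

theorem mainTheorem17:
  fixes p :: nat
  defines "\<phi> \<equiv> Imp (Neg (Box Bot)) (Imp (Neg (Neg (Box (Var p)))) (Box (Neg (Neg (Var p)))))"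
  shows "derivable {N_DiaBox, I_DiaBox} \<phi> \<and> \<not> derivable {} \<phi>"
proof
  show "derivable {N_DiaBox, I_DiaBox} \<phi>"
    unfolding \<phi>_def by (rule derivable_Box_not_not) simp_all
  show "\<not> derivable {} \<phi>"
    using counter.soundness[of "{}" \<phi> u\<^sub>0] counter_refutes
    unfolding derivable_def \<phi>_def by blast
qed

end
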